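(* Let $s\geq 3$ and let $G\in\mathcal{G}_{3}(s)$. Then $G$ is a maximal $3$-$\gamma_{c}$-vertex critical graph.
   Context: All graphs are finite and simple. A set $D\subseteq V(G)$ is a connected dominating set of $G$ if every vertex of $G$ is in $D$ or adjacent to a vertex of $D$, and $G[D]$ is connected; $\gamma_{c}(G)$ is the minimum cardinality of such a set. $G$ is $k$-$\gamma_{c}$-edge critical if $\gamma_{c}(G)=k$ and $\gamma_{c}(G+uv)<k$ for every pair of non-adjacent vertices $u,v$. A $2$-connected graph $G$ is $k$-$\gamma_{c}$-vertex critical if $\gamma_{c}(G)=k$ and $\gamma_{c}(G-v)<k$ for every $v\in V(G)$. $G$ is maximal $k$-$\gamma_{c}$-vertex critical if it is both $k$-$\gamma_{c}$-edge critical and $k$-$\gamma_{c}$-vertex critical. For $s\geq 3$, $\mathcal{G}_{3}(s)$ is the class of graphs (unique up to isomorphism) with vertex set $R\cup T\cup W\cup Z$, where $R=\{r_1,\dots,r_s\}$, $T=\{t_1,\dots,t_s\}$, $W=\{w_1,\dots,w_s\}$, $Z=\{z_1,\dots,z_s\}$ are pairwise disjoint, and whose edges are exactly: for each $1\leq i\leq s$, $r_i$ is joined to every vertex of $(T\cup W)\setminus\{t_i\}$, $t_i$ is joined to every vertex of $(W\cup Z)\setminus\{w_i\}$, and $w_i$ is joined to every vertex of $Z\setminus\{z_i\}$; in addition $R$ and $Z$ each induce a clique. (No other edges; in particular $T$ and $W$ are independent sets.) *)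

theory Defs
  imports Main
begin

definition simple_graph :: "'a set \<Rightarrow> ('a \<Rightarrow> 'a \<Rightarrow> bool) \<Rightarrow> bool" where
  "simple_graph V E \<longleftrightarrow> finite V \<and> (\<forall>x y. E x y \<longrightarrow> x \<in> V \<and> y \<in> V \<and> x \<noteq> y \<and> E y x)"

definition connected_set :: "('a \<Rightarrow> 'a \<Rightarrow> bool) \<Rightarrow> 'a set \<Rightarrow> bool" where
  "connected_set E S \<longleftrightarrow>
     (\<forall>x\<in>S. \<forall>y\<in>S. (\<lambda>a b. a \<in> S \<and> b \<in> S \<and> E a b)\<^sup>*\<^sup>* x y)"

definition connected_graph :: "'a set \<Rightarrow> ('a \<Rightarrow> 'a \<Rightarrow> bool) \<Rightarrow> bool" where
  "connected_graph V E \<longleftrightarrow> V \<noteq> {} \<and> connected_set E V"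

definition dominating_set :: "'a set \<Rightarrow> ('a \<Rightarrow> 'a \<Rightarrow> bool) \<Rightarrow> 'a set \<Rightarrow> bool" where
  "dominating_set V E D \<longleftrightarrow> D \<subseteq> V \<and> (\<forall>x\<in>V. x \<in> D \<or> (\<exists>y\<in>D. E x y))"

definition connected_dominating_set :: "'a set \<Rightarrow> ('a \<Rightarrow> 'a \<Rightarrow> bool) \<Rightarrow> 'a set \<Rightarrow> bool" where
  "connected_dominating_set V E D \<longleftrightarrow> dominating_set V E D \<and> connected_set E D"

definition gamma_c :: "'a set \<Rightarrow> ('a \<Rightarrow> 'a \<Rightarrow> bool) \<Rightarrow> nat" where
  "gamma_c V E = (LEAST n. \<exists>D. connected_dominating_set V E D \<and> card D = n)"

definition del_vertex_edges :: "('a \<Rightarrow> 'a \<Rightarrow> bool) \<Rightarrow> 'a \<Rightarrow> ('a \<Rightarrow> 'a \<Rightarrow> bool)" where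
  "del_vertex_edges E v = (\<lambda>x y. E x y \<and> x \<noteq> v \<and> y \<noteq> v)"

definition add_edge :: "('a \<Rightarrow> 'a \<Rightarrow> bool) \<Rightarrow> 'a \<Rightarrow> 'a \<Rightarrow> ('a \<Rightarrow> 'a \<Rightarrow> bool)" where
  "add_edge E u v = (\<lambda>x y. E x y \<or> (x = u \<and> y = v) \<or> (x = v \<and> y = u))"

definition two_connected :: "'a set \<Rightarrow> ('a \<Rightarrow> 'a \<Rightarrow> bool) \<Rightarrow> bool" where
  "two_connected V E \<longleftrightarrow> card V \<ge> 3 \<and> connected_graph V E \<and>
     (\<forall>v\<in>V. connected_graph (V - {v}) (del_vertex_edges E v))"

definition edge_critical :: "nat \<Rightarrow> 'a set \<Rightarrow> ('a \<Rightarrow> 'a \<Rightarrow> bool) \<Rightarrow> bool" where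
  "edge_critical k V E \<longleftrightarrow> gamma_c V E = k \<and>
     (\<forall>u\<in>V. \<forall>v\<in>V. u \<noteq> v \<and> \<not> E u v \<longrightarrow> gamma_c V (add_edge E u v) < k)"

definition vertex_critical :: "nat \<Rightarrow> 'a set \<Rightarrow> ('a \<Rightarrow> 'a \<Rightarrow> bool) \<Rightarrow> bool" where
  "vertex_critical k V E \<longleftrightarrow> two_connected V E \<and> gamma_c V E = k \<and>
     (\<forall>v\<in>V. gamma_c (V - {v}) (del_vertex_edges E v) < k)"

definition maximal_vertex_critical :: "nat \<Rightarrow> 'a set \<Rightarrow> ('a \<Rightarrow> 'a \<Rightarrow> bool) \<Rightarrow> bool" where
  "maximal_vertex_critical k V E \<longleftrightarrow> edge_critical k V E \<and> vertex_critical k V E"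

definition G3_base :: "nat \<Rightarrow> (nat \<Rightarrow> 'a) \<Rightarrow> (nat \<Rightarrow> 'a) \<Rightarrow> (nat \<Rightarrow> 'a) \<Rightarrow> (nat \<Rightarrow> 'a) \<Rightarrow> 'a \<Rightarrow> 'a \<Rightarrow> bool" where
  "G3_base s r t w z x y \<longleftrightarrow> (\<exists>i\<in>{1..s}. \<exists>j\<in>{1..s}.
      (x = r i \<and> y = r j \<and> i \<noteq> j)
    \<or> (x = r i \<and> y = t j \<and> i \<noteq> j)
    \<or> (x = r i \<and> y = w j)
    \<or> (x = t i \<and> y = w j \<and> i \<noteq> j)
    \<or> (x = t i \<and> y = z j)
    \<or> (x = w i \<and> y = z j \<and> i \<noteq> j)
    \<or> (x = z i \<and> y = z j \<and> i \<noteq> j))"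

definition in_G3 :: "nat \<Rightarrow> 'a set \<Rightarrow> ('a \<Rightarrow> 'a \<Rightarrow> bool) \<Rightarrow> bool" where
  "in_G3 s V E \<longleftrightarrow> (\<exists>r t w z.
     inj_on r {1..s} \<and> inj_on t {1..s} \<and> inj_on w {1..s} \<and> inj_on z {1..s} \<and>
     r ` {1..s} \<inter> t ` {1..s} = {} \<and> r ` {1..s} \<inter> w ` {1..s} = {} \<and>
     r ` {1..s} \<inter> z ` {1..s} = {} \<and> t ` {1..s} \<inter> w ` {1..s} = {} \<and>
     t ` {1..s} \<inter> z ` {1..s} = {} \<and> w ` {1..s} \<inter> z ` {1..s} = {} \<and>
     V = r ` {1..s} \<union> t ` {1..s} \<union> w ` {1..s} \<union> z ` {1..s} \<and>
     (\<forall>x y. E x y \<longleftrightarrow> G3_base s r t w z x y \<or> G3_base s r t w z y x))"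

end

theory Submission
  imports Defs
begin

(* The graph has neither a dominating vertex nor a dominating edge, while r_1 w_2 z_1 is a
   dominating path, so gamma_c = 3.  Deleting any vertex or adding any missing edge creates a
   dominating edge, which is a connected dominating set of size 2; for G - v it also shows that
   G - v is connected, which gives 2-connectivity. *)

lemma gamma_c_le_card:
  "connected_dominating_set V E D \<Longrightarrow> gamma_c V E \<le> card D"
  unfolding gamma_c_def by (rule Least_le) blast

lemma gamma_c_eqI:
  assumes "connected_dominating_set V E D" "card D = k"
    and "\<And>D. connected_dominating_set V E D \<Longrightarrow> k \<le> card D"
  shows "gamma_c V E = k"
  unfolding gamma_c_def by (rule Least_equality) (use assms in auto)

lemma simple_graph_del_vertex_edges:
  "simple_graph V E \<Longrightarrow> simple_graph (V - {v}) (del_vertex_edges E v)"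
  unfolding simple_graph_def del_vertex_edges_def by auto

lemma simple_graph_add_edge:
  "simple_graph V E \<Longrightarrow> u \<in> V \<Longrightarrow> v \<in> V \<Longrightarrow> u \<noteq> v \<Longrightarrow> simple_graph V (add_edge E u v)"
  unfolding simple_graph_def add_edge_def by auto

lemma add_edge_eq_if_doubleton_eq:
  "{u, v} = {a, b} \<Longrightarrow> add_edge E u v = add_edge E a b"
  unfolding add_edge_def doubleton_eq_iff by auto

lemma connected_setI_root:
  assumes sym: "\<And>x y. E x y \<Longrightarrow> E y x"
    and root: "\<And>x. x \<in> S \<Longrightarrow> (\<lambda>a b. a \<in> S \<and> b \<in> S \<and> E a b)\<^sup>*\<^sup>* c x"
  shows "connected_set E S"
  unfolding connected_set_def
proof (intro ballI)
  let ?P = "\<lambda>a b. a \<in> S \<and> b \<in> S \<and> E a b"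
  fix x y assume "x \<in> S" "y \<in> S"
  have "symp ?P\<^sup>*\<^sup>*" by (rule symp_rtranclp) (auto intro: sympI sym)
  then have "?P\<^sup>*\<^sup>* x c" using root[OF \<open>x \<in> S\<close>] by (rule sympD)
  then show "?P\<^sup>*\<^sup>* x y" using root[OF \<open>y \<in> S\<close>] by (rule rtranclp_trans)
qed

lemma connected_set_path_mono:
  "(\<lambda>a b. a \<in> S \<and> b \<in> S \<and> E a b)\<^sup>*\<^sup>* x y \<Longrightarrow> S \<subseteq> T \<Longrightarrow>
   (\<lambda>a b. a \<in> T \<and> b \<in> T \<and> E a b)\<^sup>*\<^sup>* x y"
  by (erule rtranclp_mono[THEN predicate2D, rotated]) auto

lemma connected_set_doubleton:
  "E a b \<Longrightarrow> (\<And>x y. E x y \<Longrightarrow> E y x) \<Longrightarrow> connected_set E {a, b}"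
  by (rule connected_setI_root[where c = a]) auto

lemma connected_set_Un:
  assumes sym: "\<And>x y. E x y \<Longrightarrow> E y x"
    and A: "connected_set E A" and B: "connected_set E B" and c: "c \<in> A" "c \<in> B"
  shows "connected_set E (A \<union> B)"
proof (rule connected_setI_root[OF sym, where c = c])
  fix x assume "x \<in> A \<union> B"
  then show "(\<lambda>a b. a \<in> A \<union> B \<and> b \<in> A \<union> B \<and> E a b)\<^sup>*\<^sup>* c x"
  proof
    assume "x \<in> A"
    then show ?thesis using A c(1) unfolding connected_set_def by (blast intro: connected_set_path_mono)
  next
    assume "x \<in> B"
    then show ?thesis using B c(2) unfolding connected_set_def by (blast intro: connected_set_path_mono)
  qed
qed

lemma adjacent_if_connected_set_doubleton:
  assumes "connected_set E {a, b}" "a \<noteq> b" "\<not> E a a"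
  shows "E a b"
proof -
  have "(\<lambda>x y. x \<in> {a, b} \<and> y \<in> {a, b} \<and> E x y)\<^sup>*\<^sup>* a b"
    using assms(1) unfolding connected_set_def by blast
  then show ?thesis
    using assms(2,3) by (cases rule: converse_rtranclpE) auto
qed

definition dominating_edge :: "'a set \<Rightarrow> ('a \<Rightarrow> 'a \<Rightarrow> bool) \<Rightarrow> 'a \<Rightarrow> 'a \<Rightarrow> bool" where
  "dominating_edge V E a b \<longleftrightarrow> E a b \<and> dominating_set V E {a, b}"

lemma connected_dominating_set_if_dominating_edge:
  "simple_graph V E \<Longrightarrow> dominating_edge V E a b \<Longrightarrow> connected_dominating_set V E {a, b}"
  unfolding dominating_edge_def connected_dominating_set_def simple_graph_def
  by (simp add: connected_set_doubleton)

lemma gamma_c_le_2_if_dominating_edge: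
  assumes "simple_graph V E" "dominating_edge V E a b"
  shows "gamma_c V E \<le> 2"
proof -
  have "gamma_c V E \<le> card {a, b}"
    using assms by (intro gamma_c_le_card connected_dominating_set_if_dominating_edge)
  also have "\<dots> \<le> 2" by (simp add: card_insert_if)
  finally show ?thesis .
qed

lemma connected_graph_if_connected_dominating_set:
  assumes G: "simple_graph V E" and D: "connected_dominating_set V E D" and c: "c \<in> D"
  shows "connected_graph V E"
proof -
  have sym: "\<And>x y. E x y \<Longrightarrow> E y x" and DV: "D \<subseteq> V"
    using G D unfolding simple_graph_def connected_dominating_set_def dominating_set_def by auto
  let ?P = "\<lambda>a b. a \<in> V \<and> b \<in> V \<and> E a b"
  have reach_D: "?P\<^sup>*\<^sup>* c y" if "y \<in> D" for y
  proof (rule connected_set_path_mono[OF _ DV])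
    show "(\<lambda>a b. a \<in> D \<and> b \<in> D \<and> E a b)\<^sup>*\<^sup>* c y"
      using D c that unfolding connected_dominating_set_def connected_set_def by blast
  qed
  have "connected_set E V"
  proof (rule connected_setI_root[OF sym, where c = c])
    fix x assume x: "x \<in> V"
    then consider "x \<in> D" | y where "y \<in> D" "E x y"
      using D unfolding connected_dominating_set_def dominating_set_def by blast
    then show "?P\<^sup>*\<^sup>* c x"
    proof cases
      case (2 y)
      then have "?P y x" using x DV sym by blast
      with reach_D[OF \<open>y \<in> D\<close>] show ?thesis by (rule rtranclp.rtrancl_into_rtrancl)
    qed (rule reach_D)
  qed
  then show ?thesis using c DV unfolding connected_graph_def by blast
qed

lemma card_connected_dominating_set_ge_3:
  assumes G: "simple_graph V E" and "V \<noteq> {}"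
    and no_isolated: "\<And>x. x \<in> V \<Longrightarrow> \<exists>y. E x y"
    and no_dominating_edge: "\<And>a b. \<not> dominating_edge V E a b"
    and D: "connected_dominating_set V E D"
  shows "3 \<le> card D"
proof (rule ccontr)
  assume "\<not> 3 \<le> card D"
  then consider "card D = 0" | "card D = 1" | "card D = 2" by linarith
  moreover have dom: "dominating_set V E D" and "D \<subseteq> V"
    using D unfolding connected_dominating_set_def dominating_set_def by auto
  moreover have "finite D"
    using G \<open>D \<subseteq> V\<close> finite_subset unfolding simple_graph_def by blast
  ultimately show False
  proof cases
    case 1
    then have "D = {}" using \<open>finite D\<close> by simp
    then show False using \<open>V \<noteq> {}\<close> dom unfolding dominating_set_def by blast
  next
    case 2
    then obtain a where "D = {a}" by (rule card_1_singletonE)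
    moreover obtain b where "E a b" using no_isolated \<open>D \<subseteq> V\<close> \<open>D = {a}\<close> by blast
    moreover have "b \<in> V" using G \<open>E a b\<close> unfolding simple_graph_def by blast
    ultimately have "dominating_edge V E a b"
      using dom unfolding dominating_edge_def dominating_set_def by auto
    then show False using no_dominating_edge by blast
  next
    case 3
    then obtain a b where ab: "D = {a, b}" "a \<noteq> b" by (auto simp: card_2_iff)
    moreover have "connected_set E {a, b}" "\<not> E a a"
      using D G ab unfolding connected_dominating_set_def simple_graph_def by auto
    ultimately have "E a b" by (blast intro: adjacent_if_connected_set_doubleton)
    then have "dominating_edge V E a b" using dom ab unfolding dominating_edge_def by blast
    then show False using no_dominating_edge by blast
  qed
qed

(* Two distinct indices are all the argument needs, so s >= 2 suffices here. *)
locale G3_graph =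
  fixes s :: nat and V :: "'a set" and E :: "'a \<Rightarrow> 'a \<Rightarrow> bool" and r t w z :: "nat \<Rightarrow> 'a"
  assumes two_le_s: "2 \<le> s"
    and inj: "inj_on r {1..s}" "inj_on t {1..s}" "inj_on w {1..s}" "inj_on z {1..s}"
    and disjoint: "r ` {1..s} \<inter> t ` {1..s} = {}" "r ` {1..s} \<inter> w ` {1..s} = {}"
      "r ` {1..s} \<inter> z ` {1..s} = {}" "t ` {1..s} \<inter> w ` {1..s} = {}"
      "t ` {1..s} \<inter> z ` {1..s} = {}" "w ` {1..s} \<inter> z ` {1..s} = {}"
    and vertices: "V = r ` {1..s} \<union> t ` {1..s} \<union> w ` {1..s} \<union> z ` {1..s}"
    and adjacent_iff: "\<And>x y. E x y \<longleftrightarrow> G3_base s r t w z x y \<or> G3_base s r t w z y x"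
begin

abbreviation I :: "nat set" where "I \<equiv> {1..s}"

lemma label_eq_iff [simp]:
  assumes "i \<in> I" "j \<in> I"
  shows "r i = r j \<longleftrightarrow> i = j" "t i = t j \<longleftrightarrow> i = j" "w i = w j \<longleftrightarrow> i = j" "z i = z j \<longleftrightarrow> i = j"
  using assms inj by (auto dest: inj_onD)

lemma label_neq [simp]:
  assumes "i \<in> I" "j \<in> I"
  shows "r i \<noteq> t j" "r i \<noteq> w j" "r i \<noteq> z j" "t i \<noteq> w j" "t i \<noteq> z j" "w i \<noteq> z j"
    "t i \<noteq> r j" "w i \<noteq> r j" "z i \<noteq> r j" "w i \<noteq> t j" "z i \<noteq> t j" "z i \<noteq> w j"
  using assms disjoint unfolding disjoint_iff by (metis imageI)+

lemma adjacency [simp]: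
  assumes "i \<in> I" "j \<in> I"
  shows "E (r i) (r j) \<longleftrightarrow> i \<noteq> j" "E (r i) (t j) \<longleftrightarrow> i \<noteq> j" "E (r i) (w j)" "\<not> E (r i) (z j)"
    "E (t i) (r j) \<longleftrightarrow> i \<noteq> j" "\<not> E (t i) (t j)" "E (t i) (w j) \<longleftrightarrow> i \<noteq> j" "E (t i) (z j)"
    "E (w i) (r j)" "E (w i) (t j) \<longleftrightarrow> i \<noteq> j" "\<not> E (w i) (w j)" "E (w i) (z j) \<longleftrightarrow> i \<noteq> j"
    "\<not> E (z i) (r j)" "E (z i) (t j)" "E (z i) (w j) \<longleftrightarrow> i \<noteq> j" "E (z i) (z j) \<longleftrightarrow> i \<noteq> j"
  using assms unfolding adjacent_iff G3_base_def by auto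

lemma vertex_cases:
  assumes "x \<in> V"
  obtains i where "i \<in> I" "x \<in> {r i, t i, w i, z i}"
  using assms unfolding vertices by blast

lemma in_vertices [simp]:
  "i \<in> I \<Longrightarrow> r i \<in> V" "i \<in> I \<Longrightarrow> t i \<in> V" "i \<in> I \<Longrightarrow> w i \<in> V" "i \<in> I \<Longrightarrow> z i \<in> V"
  unfolding vertices by blast+

lemma one_two_in_I: "1 \<in> I" "2 \<in> I"
  using two_le_s by auto

lemma other_index:
  assumes "i \<in> I"
  obtains j where "j \<in> I" "j \<noteq> i"
proof (cases "i = 1")
  case True
  then show ?thesis using that[of 2] one_two_in_I by simp
next
  case False
  then show ?thesis using that[of 1] one_two_in_I by simp
qed

lemma simple_graph: "simple_graph V E"
  unfolding simple_graph_def
proof (intro conjI allI impI)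
  show "finite V" by (simp add: vertices)
  fix x y assume xy: "E x y"
  then show "x \<in> V" "y \<in> V" unfolding adjacent_iff G3_base_def vertices by auto
  then obtain i where "i \<in> I" "x \<in> {r i, t i, w i, z i}" by (elim vertex_cases)
  then show "x \<noteq> y" using xy by auto
  show "E y x" using xy adjacent_iff by blast
qed

lemma card_vertices_ge_3: "3 \<le> card V"
proof -
  have "card {r 1, r 2, t 1} \<le> card V"
    using simple_graph one_two_in_I unfolding simple_graph_def by (intro card_mono) simp_all
  then show ?thesis using one_two_in_I by simp
qed

lemma has_neighbour: "x \<in> V \<Longrightarrow> \<exists>y. E x y"
  by (erule vertex_cases, elim insertE emptyE)
    (use one_two_in_I in \<open>metis adjacency(3,8,9,14)\<close>)+

lemma no_dominating_edge: "\<not> dominating_edge V E a b"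
proof
  assume "dominating_edge V E a b"
  then have ab: "E a b" and dom: "\<And>x. x \<in> V \<Longrightarrow> x = a \<or> x = b \<or> E x a \<or> E x b"
    unfolding dominating_edge_def dominating_set_def by auto
  obtain i j where i: "i \<in> I" "a \<in> {r i, t i, w i, z i}" and j: "j \<in> I" "b \<in> {r j, t j, w j, z j}"
    using simple_graph ab unfolding simple_graph_def by (metis vertex_cases)
  \<comment> \<open>some vertex among these is dominated by neither endpoint\<close>
  have "\<forall>x\<in>{r 1, z 1, r i, t i, w i, z i, r j, t j, w j, z j}. x = a \<or> x = b \<or> E x a \<or> E x b"
    using i(1) j(1) one_two_in_I dom by simp
  then show False
    using i j ab one_two_in_I by (elim insertE emptyE) simp_all
qed

lemma connected_dominating_set_r1_w2_z1: "connected_dominating_set V E {r 1, w 2, z 1}"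
  unfolding connected_dominating_set_def dominating_set_def
proof (intro conjI ballI)
  show "{r 1, w 2, z 1} \<subseteq> V" using one_two_in_I by simp
next
  fix x assume "x \<in> V"
  then show "x \<in> {r 1, w 2, z 1} \<or> (\<exists>y\<in>{r 1, w 2, z 1}. E x y)"
    by (rule vertex_cases, elim insertE emptyE) (use one_two_in_I in simp_all)
next
  have "connected_set E ({r 1, w 2} \<union> {w 2, z 1})"
    using simple_graph one_two_in_I unfolding simple_graph_def
    by (intro connected_set_Un[where c = "w 2"] connected_set_doubleton) simp_all
  then show "connected_set E {r 1, w 2, z 1}" by (simp add: insert_commute)
qed

lemma gamma_c_eq_3: "gamma_c V E = 3"
proof (rule gamma_c_eqI[OF connected_dominating_set_r1_w2_z1])
  show "card {r 1, w 2, z 1} = 3" using one_two_in_I by simp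
  have "V \<noteq> {}" using in_vertices(1)[OF one_two_in_I(1)] by blast
  with simple_graph show "3 \<le> card D" if "connected_dominating_set V E D" for D
    using has_neighbour no_dominating_edge that by (rule card_connected_dominating_set_ge_3)
qed

lemma dominating_edge_del_vertex:
  assumes "v \<in> V"
  shows "\<exists>a b. dominating_edge (V - {v}) (del_vertex_edges E v) a b"
proof -
  obtain i where i: "i \<in> I" "v \<in> {r i, t i, w i, z i}" using assms by (rule vertex_cases)
  obtain j where j: "j \<in> I" "j \<noteq> i" using i(1) by (rule other_index)
  let ?D = "dominating_edge (V - {v}) (del_vertex_edges E v)"
  from i(2) show ?thesis
  proof (elim insertE emptyE)
    assume "v = r i"
    with i(1) j have "?D (t i) (z j)"
      unfolding dominating_edge_def dominating_set_def del_vertex_edges_def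
      by (auto elim!: vertex_cases)
    then show ?thesis by blast
  next
    assume "v = t i"
    with i(1) j have "?D (r i) (t j)"
      unfolding dominating_edge_def dominating_set_def del_vertex_edges_def
      by (auto elim!: vertex_cases)
    then show ?thesis by blast
  next
    assume "v = w i"
    with i(1) j have "?D (w j) (z i)"
      unfolding dominating_edge_def dominating_set_def del_vertex_edges_def
      by (auto elim!: vertex_cases)
    then show ?thesis by blast
  next
    assume "v = z i"
    with i(1) j have "?D (r j) (w i)"
      unfolding dominating_edge_def dominating_set_def del_vertex_edges_def
      by (auto elim!: vertex_cases)
    then show ?thesis by blast
  qed
qed

lemma non_adjacent_cases:
  assumes "u \<in> V" "v \<in> V" "u \<noteq> v" "\<not> E u v"
  obtains (r_t) i where "i \<in> I" "{u, v} = {r i, t i}"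
    | (r_z) i j where "i \<in> I" "j \<in> I" "{u, v} = {r i, z j}"
    | (t_t) i j where "i \<in> I" "j \<in> I" "i \<noteq> j" "{u, v} = {t i, t j}"
    | (t_w) i where "i \<in> I" "{u, v} = {t i, w i}"
    | (w_w) i j where "i \<in> I" "j \<in> I" "i \<noteq> j" "{u, v} = {w i, w j}"
    | (w_z) i where "i \<in> I" "{u, v} = {w i, z i}"
proof -
  obtain i j where i: "i \<in> I" "u \<in> {r i, t i, w i, z i}" and j: "j \<in> I" "v \<in> {r j, t j, w j, z j}"
    using assms(1,2) by (metis vertex_cases)
  from i(2) j(2) show thesis
    using i(1) j(1) assms(3,4) by (elim insertE emptyE) (auto intro: that simp: insert_commute)
qed

lemma dominating_edge_add_edge:
  assumes "u \<in> V" "v \<in> V" "u \<noteq> v" "\<not> E u v"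
  shows "\<exists>a b. dominating_edge V (add_edge E u v) a b"
  using assms
proof (cases rule: non_adjacent_cases)
  case (r_t i)
  have "dominating_edge V (add_edge E (r i) (t i)) (r i) (t i)"
    using r_t(1) unfolding dominating_edge_def dominating_set_def add_edge_def
    by (auto elim!: vertex_cases)
  then show ?thesis using add_edge_eq_if_doubleton_eq[OF r_t(2)] by auto
next
  case (r_z i j)
  have "dominating_edge V (add_edge E (r i) (z j)) (r i) (z j)"
    using r_z(1,2) unfolding dominating_edge_def dominating_set_def add_edge_def
    by (auto elim!: vertex_cases)
  then show ?thesis using add_edge_eq_if_doubleton_eq[OF r_z(3)] by auto
next
  case (t_t i j)
  have "dominating_edge V (add_edge E (t i) (t j)) (r j) (t i)"
    using t_t(1-3) unfolding dominating_edge_def dominating_set_def add_edge_def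
    by (auto elim!: vertex_cases)
  then show ?thesis using add_edge_eq_if_doubleton_eq[OF t_t(4)] by auto
next
  case (t_w i)
  have "dominating_edge V (add_edge E (t i) (w i)) (t i) (w i)"
    using t_w(1) unfolding dominating_edge_def dominating_set_def add_edge_def
    by (auto elim!: vertex_cases)
  then show ?thesis using add_edge_eq_if_doubleton_eq[OF t_w(2)] by auto
next
  case (w_w i j)
  have "dominating_edge V (add_edge E (w i) (w j)) (w i) (z j)"
    using w_w(1-3) unfolding dominating_edge_def dominating_set_def add_edge_def
    by (auto elim!: vertex_cases)
  then show ?thesis using add_edge_eq_if_doubleton_eq[OF w_w(4)] by auto
next
  case (w_z i)
  obtain k where "k \<in> I" "k \<noteq> i" using \<open>i \<in> I\<close> by (rule other_index)
  have "dominating_edge V (add_edge E (w i) (z i)) (r k) (w i)"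
    using w_z(1) \<open>k \<in> I\<close> \<open>k \<noteq> i\<close> unfolding dominating_edge_def dominating_set_def add_edge_def
    by (auto elim!: vertex_cases)
  then show ?thesis using add_edge_eq_if_doubleton_eq[OF w_z(2)] by auto
qed

lemma maximal_vertex_critical_3: "maximal_vertex_critical 3 V E"
  unfolding maximal_vertex_critical_def edge_critical_def vertex_critical_def two_connected_def
proof (intro conjI ballI impI)
  show "gamma_c V E = 3" by (rule gamma_c_eq_3)
  then show "gamma_c V E = 3" .
  show "3 \<le> card V" by (rule card_vertices_ge_3)
  show "connected_graph V E"
    using simple_graph connected_dominating_set_r1_w2_z1 insertI1
    by (rule connected_graph_if_connected_dominating_set)
next
  fix v assume "v \<in> V"
  then obtain a b where ab: "dominating_edge (V - {v}) (del_vertex_edges E v) a b"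
    using dominating_edge_del_vertex by blast
  have G': "simple_graph (V - {v}) (del_vertex_edges E v)"
    using simple_graph by (rule simple_graph_del_vertex_edges)
  show "gamma_c (V - {v}) (del_vertex_edges E v) < 3"
    using gamma_c_le_2_if_dominating_edge[OF G' ab] by simp
  show "connected_graph (V - {v}) (del_vertex_edges E v)"
    using G' connected_dominating_set_if_dominating_edge[OF G' ab] insertI1
    by (rule connected_graph_if_connected_dominating_set)
next
  fix u v assume uv: "u \<in> V" "v \<in> V" "u \<noteq> v \<and> \<not> E u v"
  then obtain a b where ab: "dominating_edge V (add_edge E u v) a b"
    using dominating_edge_add_edge by blast
  have G': "simple_graph V (add_edge E u v)"
    using simple_graph uv by (intro simple_graph_add_edge) auto
  show "gamma_c V (add_edge E u v) < 3"
    using gamma_c_le_2_if_dominating_edge[OF G' ab] by simp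
qed

end

theorem lemma4p8:
  fixes s :: nat and V :: "'a set" and E :: "'a \<Rightarrow> 'a \<Rightarrow> bool"
  assumes "s \<ge> 3" and "in_G3 s V E"
  shows "maximal_vertex_critical 3 V E"
proof -
  from assms(2) obtain r t w z where
    "inj_on r {1..s}" "inj_on t {1..s}" "inj_on w {1..s}" "inj_on z {1..s}"
    "r ` {1..s} \<inter> t ` {1..s} = {}" "r ` {1..s} \<inter> w ` {1..s} = {}"
    "r ` {1..s} \<inter> z ` {1..s} = {}" "t ` {1..s} \<inter> w ` {1..s} = {}"
    "t ` {1..s} \<inter> z ` {1..s} = {}" "w ` {1..s} \<inter> z ` {1..s} = {}"
    "V = r ` {1..s} \<union> t ` {1..s} \<union> w ` {1..s} \<union> z ` {1..s}"
    "\<And>x y. E x y \<longleftrightarrow> G3_base s r t w z x y \<or> G3_base s r t w z y x"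
    unfolding in_G3_def by blast
  moreover have "2 \<le> s" using assms(1) by simp
  ultimately have "G3_graph s V E r t w z" by unfold_locales
  then show ?thesis by (rule G3_graph.maximal_vertex_critical_3)
qed

end
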